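(* An atom of the lattice $\mathbf{Com}$ is a neutral element of $\mathbf{Com}$ if and only if it is one of the varieties $\mathcal{SL}$ or $\mathcal{ZM}$.
   Context: $\mathbf{Com}$ denotes the lattice of all commutative semigroup varieties. An element $x$ of a lattice is neutral if for all $y,z$: $(x\vee y)\wedge(y\vee z)\wedge(z\vee x)=(x\wedge y)\vee(y\wedge z)\vee(z\wedge x)$. $\mathcal{SL}=\operatorname{var}\{x^2=x,\ xy=yx\}$ is the variety of semilattices and $\mathcal{ZM}=\operatorname{var}\{xy=0\}$ the variety of null semigroups, where $xy=0$ abbreviates $xyz=zxy=xy$. *)

theory Defs
  imports Main "HOL-Library.Multiset"
begin

text \<open>Words of the free commutative semigroup over the countable alphabet of
variables x_0, x_1, ... : nonempty multisets of variable indices.\<close>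
type_synonym word = "nat multiset"

definition Words :: "word set" where
  "Words = {w. w \<noteq> {#}}"

definition subst :: "(nat \<Rightarrow> word) \<Rightarrow> word \<Rightarrow> word" where
  "subst \<sigma> w = \<Sum>\<^sub># (image_mset \<sigma> w)"

text \<open>Equational theories of commutative semigroup varieties = fully invariant
congruences on the free commutative semigroup. A variety of commutative semigroups
is identified with its equational theory (Birkhoff).\<close>
definition fic :: "(word \<times> word) set \<Rightarrow> bool" where
  "fic T \<longleftrightarrow> T \<subseteq> Words \<times> Words \<and> refl_on Words T \<and> sym T \<and> trans T
     \<and> (\<forall>u v w. (u, v) \<in> T \<longrightarrow> w \<in> Words \<longrightarrow> (u + w, v + w) \<in> T)
     \<and> (\<forall>\<sigma> u v. (\<forall>x. \<sigma> x \<noteq> {#}) \<longrightarrow> (u, v) \<in> T \<longrightarrow> (subst \<sigma> u, subst \<sigma> v) \<in> T)"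

definition eq_closure :: "(word \<times> word) set \<Rightarrow> (word \<times> word) set" where
  "eq_closure E = \<Inter>{S. fic S \<and> E \<subseteq> S}"

text \<open>Lattice operations of Com, expressed on equational theories
(the variety lattice is dually isomorphic to the lattice of theories).\<close>
definition com_join :: "(word \<times> word) set \<Rightarrow> (word \<times> word) set \<Rightarrow> (word \<times> word) set" where
  "com_join T1 T2 = T1 \<inter> T2"

definition com_meet :: "(word \<times> word) set \<Rightarrow> (word \<times> word) set \<Rightarrow> (word \<times> word) set" where
  "com_meet T1 T2 = eq_closure (T1 \<union> T2)"

text \<open>Variety V1 is contained in V2 iff Id(V2) is contained in Id(V1).\<close>
definition com_le :: "(word \<times> word) set \<Rightarrow> (word \<times> word) set \<Rightarrow> bool" where
  "com_le T1 T2 \<longleftrightarrow> T2 \<subseteq> T1"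

text \<open>Trivial variety: all identities hold.\<close>
definition com_bot :: "(word \<times> word) set" where
  "com_bot = Words \<times> Words"

definition com_atom :: "(word \<times> word) set \<Rightarrow> bool" where
  "com_atom X \<longleftrightarrow> fic X \<and> X \<noteq> com_bot \<and>
     (\<forall>Y. fic Y \<longrightarrow> com_le Y X \<longrightarrow> Y = com_bot \<or> Y = X)"

definition com_neutral :: "(word \<times> word) set \<Rightarrow> bool" where
  "com_neutral X \<longleftrightarrow> fic X \<and> (\<forall>Y Z. fic Y \<longrightarrow> fic Z \<longrightarrow>
     com_meet (com_meet (com_join X Y) (com_join Y Z)) (com_join Z X)
     = com_join (com_join (com_meet X Y) (com_meet Y Z)) (com_meet Z X))"

text \<open>SL = var{x^2 = x, xy = yx}; ZM = var{xyz = xy, zxy = xy} (commutativity built in).\<close>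
definition SL :: "(word \<times> word) set" where
  "SL = eq_closure {({#0, 0#}, {#0#})}"

definition ZM :: "(word \<times> word) set" where
  "ZM = eq_closure {({#0, 1, 2#}, {#0, 1#}), ({#2, 0, 1#}, {#0, 1#})}"

end

(*
  A variety is represented by its equational theory, so joins become intersections and
  meets become equational closures of unions. Neutrality of X then says that every
  identity of (X \/ Y) /\ (Y \/ Z) /\ (Z \/ X) follows from identities that hold in two
  of X, Y, Z.

  A variety not containing SL satisfies x^a = x^a y^c for some a, c >= 1, and one not
  containing ZM satisfies x = x^(m+1) for some m >= 1. For X = SL such a law reduces an
  arbitrary identity to a content-preserving one, and for X = ZM to one between words of
  length at least two; on those identities X decides itself. When exactly one of Y, Z
  contains X, an intermediate theory squeezed between the two sides does the job.

  An atom X other than SL and ZM satisfies x = x y^c but not x = y. Take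
  Z = var{x1x2x3x4 = y1y2y3y4} and Y = Z /\ var{x^2 y = x y^2}. Since Z satisfies
  x (x^2 y^2)^c = y (x^2 y^2)^c and X does not, atomicity makes X /\ Z trivial, so the
  lower side (X /\ Y) \/ (Y /\ Z) \/ (Z /\ X) satisfies x^2 y = x y^2. As X violates
  x^2 y = x y^2, the upper side has only the identities of Z, and neutrality fails.
*)

theory Submission
  imports Defs
begin

lemma Words_iff [simp]: "w \<in> Words \<longleftrightarrow> w \<noteq> {#}"
  by (simp add: Words_def)

lemma set_mset_repeat_mset [simp]:
  "set_mset (repeat_mset n A) = (if n = 0 then {} else set_mset A)"
  by (induct n) auto

lemma subst_empty [simp]: "subst \<sigma> {#} = {#}"
  by (simp add: subst_def)

lemma subst_add_mset [simp]: "subst \<sigma> (add_mset z w) = \<sigma> z + subst \<sigma> w"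
  by (simp add: subst_def)

lemma subst_plus [simp]: "subst \<sigma> (u + w) = subst \<sigma> u + subst \<sigma> w"
  by (simp add: subst_def)

lemma subst_repeat_mset [simp]: "subst \<sigma> (repeat_mset n w) = repeat_mset n (subst \<sigma> w)"
  by (induct n) auto

lemma set_mset_subst: "set_mset (subst \<sigma> w) = (\<Union>z\<in>set_mset w. set_mset (\<sigma> z))"
  by (induct w) auto

lemma subst_id_on: "(\<And>z. z \<in># w \<Longrightarrow> \<sigma> z = {#z#}) \<Longrightarrow> subst \<sigma> w = w"
  by (induct w) auto

lemma subst_nonempty: "w \<noteq> {#} \<Longrightarrow> \<forall>x. \<sigma> x \<noteq> {#} \<Longrightarrow> subst \<sigma> w \<noteq> {#}"
  by (induct w) auto

lemma size_subst_ge: "\<forall>x. \<sigma> x \<noteq> {#} \<Longrightarrow> size w \<le> size (subst \<sigma> w)"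
proof (induct w)
  case (add x w)
  then have "1 \<le> size (\<sigma> x)"
    by (simp add: Suc_le_eq nonempty_has_size)
  with add show ?case by simp
qed simp

lemma subst_const: "subst (\<lambda>_. s) v = repeat_mset (size v) s"
  by (induct v) auto

lemma subst_const_but_one:
  "subst (\<lambda>z. if z = y then s + t else s) v = repeat_mset (size v) s + repeat_mset (count v y) t"
  by (induct v) (auto simp: add_ac)

lemma ficI:
  assumes "T \<subseteq> Words \<times> Words"
    and "\<And>u. u \<noteq> {#} \<Longrightarrow> (u, u) \<in> T"
    and "\<And>u v. (u, v) \<in> T \<Longrightarrow> (v, u) \<in> T"
    and "\<And>u v w. (u, v) \<in> T \<Longrightarrow> (v, w) \<in> T \<Longrightarrow> (u, w) \<in> T"
    and "\<And>u v w. (u, v) \<in> T \<Longrightarrow> w \<noteq> {#} \<Longrightarrow> (u + w, v + w) \<in> T"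
    and "\<And>\<sigma> u v. \<forall>x. \<sigma> x \<noteq> {#} \<Longrightarrow> (u, v) \<in> T \<Longrightarrow> (subst \<sigma> u, subst \<sigma> v) \<in> T"
  shows "fic T"
  unfolding fic_def
proof (intro conjI allI impI)
  show "refl_on Words T"
    using assms(1,2) by (auto intro: refl_onI)
  show "sym T"
    by (rule symI) (rule assms(3))
  show "trans T"
    by (rule transI) (rule assms(4))
  show "T \<subseteq> Words \<times> Words"
    by (rule assms(1))
qed (simp_all add: assms(5,6))

lemma fic_parts:
  assumes "fic T"
  shows "T \<subseteq> Words \<times> Words" "refl_on Words T" "sym T" "trans T"
    "\<And>u v w. (u, v) \<in> T \<Longrightarrow> w \<in> Words \<Longrightarrow> (u + w, v + w) \<in> T"
    "\<And>\<sigma> u v. \<forall>x. \<sigma> x \<noteq> {#} \<Longrightarrow> (u, v) \<in> T \<Longrightarrow> (subst \<sigma> u, subst \<sigma> v) \<in> T"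
  using assms unfolding fic_def by blast+

lemma fic_subset_Words: "fic T \<Longrightarrow> T \<subseteq> Words \<times> Words"
  by (rule fic_parts(1))

lemma fic_nonempty:
  assumes "fic T" "(u, v) \<in> T"
  shows "u \<noteq> {#}" "v \<noteq> {#}"
  using fic_subset_Words[OF assms(1)] assms(2) by auto

lemma fic_refl: "fic T \<Longrightarrow> u \<noteq> {#} \<Longrightarrow> (u, u) \<in> T"
  using fic_parts(2) refl_onD[of Words T u] by simp

lemma fic_sym: "fic T \<Longrightarrow> (u, v) \<in> T \<Longrightarrow> (v, u) \<in> T"
  using fic_parts(3) symD by metis

lemma fic_trans: "fic T \<Longrightarrow> (u, v) \<in> T \<Longrightarrow> (v, w) \<in> T \<Longrightarrow> (u, w) \<in> T"
  using fic_parts(4) transD by metis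

lemma fic_add_right: "fic T \<Longrightarrow> (u, v) \<in> T \<Longrightarrow> (u + w, v + w) \<in> T"
  using fic_parts(5)[of T u v w] by (cases "w = {#}") auto

lemma fic_add_left: "fic T \<Longrightarrow> (u, v) \<in> T \<Longrightarrow> (w + u, w + v) \<in> T"
  using fic_add_right[of T u v w] by (simp only: add.commute[of u w] add.commute[of v w])

lemma fic_subst: "fic T \<Longrightarrow> (u, v) \<in> T \<Longrightarrow> \<forall>x. \<sigma> x \<noteq> {#} \<Longrightarrow> (subst \<sigma> u, subst \<sigma> v) \<in> T"
  by (rule fic_parts(6))

lemma fic_add: "fic T \<Longrightarrow> (u, v) \<in> T \<Longrightarrow> (u', v') \<in> T \<Longrightarrow> (u + u', v + v') \<in> T"
  using fic_trans[OF _ fic_add_right fic_add_left] by blast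

lemma fic_repeat_mset:
  assumes "fic T" "(u, v) \<in> T"
  shows "(repeat_mset (Suc n) u, repeat_mset (Suc n) v) \<in> T"
proof (induct n)
  case 0
  then show ?case using assms(2) by simp
next
  case (Suc n)
  then show ?case using fic_add[OF assms(1,2) Suc] by simp
qed

lemma fic_absorb_repeat:
  assumes "fic T" "(u, u + f) \<in> T"
  shows "(u, u + repeat_mset j f) \<in> T"
proof (induct j)
  case 0
  then show ?case using assms fic_refl fic_nonempty by simp
next
  case (Suc j)
  have "(u + f, u + repeat_mset j f + f) \<in> T"
    using fic_add_right[OF assms(1) Suc] .
  then show ?case
    using fic_trans[OF assms] by (simp add: add_ac)
qed

lemma fic_Inter:
  assumes "F \<noteq> {}" "\<And>S. S \<in> F \<Longrightarrow> fic S"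
  shows "fic (\<Inter>F)"
proof (rule ficI)
  show "\<Inter>F \<subseteq> Words \<times> Words"
    using assms fic_subset_Words by blast
  show "\<And>u. u \<noteq> {#} \<Longrightarrow> (u, u) \<in> \<Inter>F"
    by (rule InterI) (simp add: assms(2) fic_refl)
  show "(v, u) \<in> \<Inter>F" if "(u, v) \<in> \<Inter>F" for u v
    using that by (intro InterI) (meson InterD assms(2) fic_sym)
  show "(u, w) \<in> \<Inter>F" if "(u, v) \<in> \<Inter>F" "(v, w) \<in> \<Inter>F" for u v w
    using that by (intro InterI) (meson InterD assms(2) fic_trans)
  show "(u + w, v + w) \<in> \<Inter>F" if "(u, v) \<in> \<Inter>F" for u v w
    using that by (intro InterI) (meson InterD assms(2) fic_add_right)
  show "(subst \<sigma> u, subst \<sigma> v) \<in> \<Inter>F" if "\<forall>x. \<sigma> x \<noteq> {#}" "(u, v) \<in> \<Inter>F" for \<sigma> u v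
    using that by (intro InterI) (meson InterD assms(2) fic_subst)
qed

lemma fic_Int:
  assumes "fic A" "fic B"
  shows "fic (A \<inter> B)"
proof -
  have "fic (\<Inter>{A, B})"
    using assms by (intro fic_Inter) auto
  then show ?thesis by simp
qed

lemma fic_bot: "fic com_bot"
  unfolding com_bot_def by (rule ficI) (simp_all add: subst_nonempty)

lemma fic_eq_closure: "A \<subseteq> Words \<times> Words \<Longrightarrow> fic (eq_closure A)"
  unfolding eq_closure_def using fic_bot by (intro fic_Inter) (auto simp: com_bot_def)

lemma eq_closure_upper: "A \<subseteq> eq_closure A"
  unfolding eq_closure_def by auto

lemma eq_closure_least: "fic T \<Longrightarrow> A \<subseteq> T \<Longrightarrow> eq_closure A \<subseteq> T"
  unfolding eq_closure_def by auto

lemma eq_closure_fic: "fic T \<Longrightarrow> eq_closure T = T"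
  by (rule subset_antisym[OF eq_closure_least[OF _ order_refl] eq_closure_upper])

lemma eq_closure_mono: "A \<subseteq> B \<Longrightarrow> B \<subseteq> Words \<times> Words \<Longrightarrow> eq_closure A \<subseteq> eq_closure B"
  using eq_closure_least[OF fic_eq_closure, of B A] eq_closure_upper[of B] by blast

lemma eq_closure_Un_left:
  assumes "A \<subseteq> Words \<times> Words" "B \<subseteq> Words \<times> Words"
  shows "eq_closure (eq_closure A \<union> B) = eq_closure (A \<union> B)"
proof
  have "eq_closure A \<subseteq> eq_closure (A \<union> B)"
    using assms by (intro eq_closure_mono) auto
  then show "eq_closure (eq_closure A \<union> B) \<subseteq> eq_closure (A \<union> B)"
    using assms eq_closure_upper[of "A \<union> B"]
    by (intro eq_closure_least fic_eq_closure) auto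
  show "eq_closure (A \<union> B) \<subseteq> eq_closure (eq_closure A \<union> B)"
    using assms fic_subset_Words[OF fic_eq_closure] eq_closure_upper[of A]
    by (intro eq_closure_mono) auto
qed

subsection \<open>The equational theories of $\mathcal{SL}$ and $\mathcal{ZM}$\<close>

definition content_theory :: "(word \<times> word) set" where
  "content_theory = {(u, v). u \<noteq> {#} \<and> v \<noteq> {#} \<and> set_mset u = set_mset v}"

text \<open>The theory of \<open>var{x\<^sub>1 \<cdots> x\<^sub>k = y\<^sub>1 \<cdots> y\<^sub>k}\<close>.\<close>
definition nil_theory :: "nat \<Rightarrow> (word \<times> word) set" where
  "nil_theory k = {(u, v). u \<noteq> {#} \<and> v \<noteq> {#} \<and> (u = v \<or> k \<le> size u \<and> k \<le> size v)}"

lemma content_theory_iff: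
  "(u, v) \<in> content_theory \<longleftrightarrow> u \<noteq> {#} \<and> v \<noteq> {#} \<and> set_mset u = set_mset v"
  by (simp add: content_theory_def)

lemma nil_theory_iff:
  "(u, v) \<in> nil_theory k \<longleftrightarrow> u \<noteq> {#} \<and> v \<noteq> {#} \<and> (u = v \<or> k \<le> size u \<and> k \<le> size v)"
  by (simp add: nil_theory_def)

lemma fic_content_theory: "fic content_theory"
  unfolding content_theory_def
  by (rule ficI) (auto simp: subst_nonempty set_mset_subst)

lemma fic_nil_theory: "fic (nil_theory k)"
proof (rule ficI)
  show "(subst \<sigma> u, subst \<sigma> v) \<in> nil_theory k"
    if "\<forall>x. \<sigma> x \<noteq> {#}" "(u, v) \<in> nil_theory k" for \<sigma> u v
    using that size_subst_ge[OF that(1), of u] size_subst_ge[OF that(1), of v]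
    by (auto simp: nil_theory_iff subst_nonempty)
qed (auto simp: nil_theory_iff)

lemma content_theory_subset:
  assumes T: "fic T" and idem: "({#0, 0#}, {#0#}) \<in> T"
  shows "content_theory \<subseteq> T"
proof -
  have absorb_letter: "(r, r + {#z#}) \<in> T" if z: "z \<in># r" for r z
  proof -
    obtain r' where r: "r = add_mset z r'"
      using multi_member_split[OF z] by blast
    have "({#z, z#}, {#z#}) \<in> T"
      using fic_subst[OF T idem, of "\<lambda>_. {#z#}"] by simp
    then have "({#z, z#} + r', {#z#} + r') \<in> T"
      by (rule fic_add_right[OF T])
    then have "(r + {#z#}, r) \<in> T"
      using r by simp
    then show ?thesis
      using fic_sym[OF T] by blast
  qed
  have absorb: "(r, r + w) \<in> T" if w: "set_mset w \<subseteq> set_mset r" and r: "r \<noteq> {#}" for r w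
    using w
  proof (induct w)
    case empty
    then show ?case using fic_refl[OF T r] by simp
  next
    case (add z w)
    then have "(r + w, r + w + {#z#}) \<in> T"
      using absorb_letter by simp
    then show ?case
      using fic_trans[OF T] add by simp
  qed
  show ?thesis
  proof (safe)
    fix u v assume "(u, v) \<in> content_theory"
    then have uv: "u \<noteq> {#}" "v \<noteq> {#}" "set_mset u = set_mset v"
      by (simp_all add: content_theory_iff)
    have "(u, u + v) \<in> T" "(v, v + u) \<in> T"
      using absorb uv by auto
    then show "(u, v) \<in> T"
      using fic_trans[OF T] fic_sym[OF T] by (metis add.commute)
  qed
qed

lemma SL_eq: "SL = content_theory"
proof
  have gen: "{({#0, 0#}, {#0::nat#})} \<subseteq> content_theory"
    by (simp add: content_theory_iff)
  then show "SL \<subseteq> content_theory"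
    unfolding SL_def by (rule eq_closure_least[OF fic_content_theory])
  have "fic SL"
    unfolding SL_def using gen fic_subset_Words[OF fic_content_theory]
    by (intro fic_eq_closure) blast
  moreover have "({#0, 0#}, {#0#}) \<in> SL"
    unfolding SL_def using eq_closure_upper by blast
  ultimately show "content_theory \<subseteq> SL"
    by (rule content_theory_subset)
qed

lemma nil_theory_2_subset:
  assumes T: "fic T" and gen: "({#0, 1, 2#}, {#0, 1#}) \<in> T"
  shows "nil_theory 2 \<subseteq> T"
proof -
  have absorb: "(p, p + w) \<in> T" if size_p: "2 \<le> size p" and w: "w \<noteq> {#}" for p w
  proof -
    obtain a r where p: "p = add_mset a r" and r: "r \<noteq> {#}"
      using size_p by (cases p) (auto simp: Suc_le_eq nonempty_has_size)
    let ?\<sigma> = "\<lambda>z::nat. if z = 0 then {#a#} else if z = 1 then r else w"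
    have "\<forall>x. ?\<sigma> x \<noteq> {#}"
      using r w by simp
    then have "(subst ?\<sigma> {#0, 1, 2#}, subst ?\<sigma> {#0, 1#}) \<in> T"
      by (rule fic_subst[OF T gen])
    then have "(p + w, p) \<in> T"
      using p by simp
    then show ?thesis
      using fic_sym[OF T] by blast
  qed
  show ?thesis
  proof (safe)
    fix u v assume uv: "(u, v) \<in> nil_theory 2"
    show "(u, v) \<in> T"
    proof (cases "u = v")
      case True
      then show ?thesis using uv fic_refl[OF T] by (simp add: nil_theory_iff)
    next
      case False
      then have "(u, u + v) \<in> T" "(v, v + u) \<in> T"
        using uv absorb by (auto simp: nil_theory_iff)
      then show ?thesis
        using fic_trans[OF T] fic_sym[OF T] by (metis add.commute)
    qed
  qed
qed

lemma ZM_eq: "ZM = nil_theory 2"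
proof
  have gen: "{({#0, 1, 2#}, {#0, 1#}), ({#2, 0, 1#}, {#0::nat, 1#})} \<subseteq> nil_theory 2"
    by (simp add: nil_theory_iff)
  then show "ZM \<subseteq> nil_theory 2"
    unfolding ZM_def by (rule eq_closure_least[OF fic_nil_theory])
  have "fic ZM"
    unfolding ZM_def using gen fic_subset_Words[OF fic_nil_theory]
    by (intro fic_eq_closure) blast
  moreover have "({#0, 1, 2#}, {#0, 1#}) \<in> ZM"
    unfolding ZM_def using eq_closure_upper by blast
  ultimately show "nil_theory 2 \<subseteq> ZM"
    by (rule nil_theory_2_subset)
qed

subsection \<open>Identities forced by leaving $\mathcal{SL}$ or $\mathcal{ZM}$\<close>

definition satisfies_absorption :: "(word \<times> word) set \<Rightarrow> nat \<Rightarrow> nat \<Rightarrow> bool" where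
  "satisfies_absorption T a c \<longleftrightarrow> (\<forall>s t. s \<noteq> {#} \<longrightarrow> t \<noteq> {#} \<longrightarrow>
      (repeat_mset a s, repeat_mset a s + repeat_mset c t) \<in> T)"

definition satisfies_period :: "(word \<times> word) set \<Rightarrow> nat \<Rightarrow> bool" where
  "satisfies_period T m \<longleftrightarrow> (\<forall>s. s \<noteq> {#} \<longrightarrow> (s, s + repeat_mset m s) \<in> T)"

lemma satisfies_absorptionD:
  "satisfies_absorption T a c \<Longrightarrow> s \<noteq> {#} \<Longrightarrow> t \<noteq> {#} \<Longrightarrow>
    (repeat_mset a s, repeat_mset a s + repeat_mset c t) \<in> T"
  unfolding satisfies_absorption_def by blast

lemma satisfies_periodD: "satisfies_period T m \<Longrightarrow> s \<noteq> {#} \<Longrightarrow> (s, s + repeat_mset m s) \<in> T"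
  unfolding satisfies_period_def by blast

lemma satisfies_absorption_mono:
  "satisfies_absorption T a c \<Longrightarrow> T \<subseteq> T' \<Longrightarrow> satisfies_absorption T' a c"
  unfolding satisfies_absorption_def by blast

lemma satisfies_period_mono: "satisfies_period T m \<Longrightarrow> T \<subseteq> T' \<Longrightarrow> satisfies_period T' m"
  unfolding satisfies_period_def by blast

lemma satisfies_absorption_of_new_letter:
  assumes T: "fic T" and uv: "(u, v) \<in> T" and y: "y \<in># v" "y \<notin># u"
  shows "satisfies_absorption T (size u) (count v y)"
  unfolding satisfies_absorption_def
proof (intro allI impI)
  fix s t :: word
  assume s: "s \<noteq> {#}" and t: "t \<noteq> {#}"
  have "count u y = 0"
    using y(2) by (simp add: not_in_iff)
  then have mixed: "(repeat_mset (size u) s, repeat_mset (size v) s + repeat_mset (count v y) t) \<in> T"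
    using fic_subst[OF T uv, of "\<lambda>z. if z = y then s + t else s"] s
    by (simp only: subst_const_but_one) simp
  have "(repeat_mset (size u) s, repeat_mset (size v) s) \<in> T"
    using fic_subst[OF T uv, of "\<lambda>_. s"] s by (simp only: subst_const) simp
  then have "(repeat_mset (size v) s + repeat_mset (count v y) t,
      repeat_mset (size u) s + repeat_mset (count v y) t) \<in> T"
    by (rule fic_add_right[OF T fic_sym[OF T]])
  then show "(repeat_mset (size u) s, repeat_mset (size u) s + repeat_mset (count v y) t) \<in> T"
    by (rule fic_trans[OF T mixed])
qed

lemma satisfies_absorption_if_not_subset_content:
  assumes T: "fic T" and "\<not> T \<subseteq> content_theory"
  obtains a c where "1 \<le> a" "1 \<le> c" "satisfies_absorption T a c"
proof -
  obtain u v where uv: "(u, v) \<in> T" "(u, v) \<notin> content_theory"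
    using assms by auto
  then have "set_mset u \<noteq> set_mset v"
    using fic_nonempty[OF T uv(1)] by (simp add: content_theory_iff)
  then have "\<exists>y. y \<in># v \<and> y \<notin># u \<or> y \<in># u \<and> y \<notin># v"
    by blast
  then obtain y p q where pq: "(p, q) \<in> T" "y \<in># q" "y \<notin># p"
    using uv(1) fic_sym[OF T uv(1)] by blast
  have "1 \<le> size p"
    using fic_nonempty[OF T pq(1)] by (simp add: Suc_le_eq nonempty_has_size)
  moreover have "1 \<le> count q y"
    using pq(2) by (simp add: Suc_le_eq)
  ultimately show ?thesis
    using that satisfies_absorption_of_new_letter[OF T pq] by blast
qed

lemma satisfies_absorption_enlarge:
  assumes T: "fic T" and E: "satisfies_absorption T a c"
  shows "satisfies_absorption T (a + d) (c * j)"
  unfolding satisfies_absorption_def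
proof (intro allI impI)
  fix s t :: word
  assume s: "s \<noteq> {#}" and t: "t \<noteq> {#}"
  have "(repeat_mset a s, repeat_mset a s + repeat_mset j (repeat_mset c t)) \<in> T"
    by (rule fic_absorb_repeat[OF T satisfies_absorptionD[OF E s t]])
  then have "(repeat_mset a s + repeat_mset d s,
      repeat_mset a s + repeat_mset (c * j) t + repeat_mset d s) \<in> T"
    by (simp add: fic_add_right[OF T] mult.commute)
  then show "(repeat_mset (a + d) s, repeat_mset (a + d) s + repeat_mset (c * j) t) \<in> T"
    by (simp add: repeat_mset_distrib add_ac)
qed

lemma satisfies_absorption_Int:
  assumes "fic Y" "fic Z" "satisfies_absorption Y a c" "satisfies_absorption Z a' c'"
  shows "satisfies_absorption (Y \<inter> Z) (a + a') (c * c')"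
  using satisfies_absorption_enlarge[OF assms(1,3), of a' c']
    satisfies_absorption_enlarge[OF assms(2,4), of a c]
  unfolding satisfies_absorption_def by (simp add: add.commute mult.commute)

lemma satisfies_period_of_letter_pair:
  assumes T: "fic T" and xq: "({#x#}, q) \<in> T" "q \<noteq> {#x#}"
  obtains m where "1 \<le> m" "satisfies_period T m"
proof (cases "2 \<le> size q")
  case True
  have "satisfies_period T (size q - 1)"
    unfolding satisfies_period_def
  proof (intro allI impI)
    fix s :: word
    assume "s \<noteq> {#}"
    then have "(s, repeat_mset (size q) s) \<in> T"
      using fic_subst[OF T xq(1), of "\<lambda>_. s"] by (simp add: subst_const)
    moreover have "repeat_mset (size q) s = s + repeat_mset (size q - 1) s"
      using True by (cases "size q") auto
    ultimately show "(s, s + repeat_mset (size q - 1) s) \<in> T"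
      by simp
  qed
  moreover have "1 \<le> size q - 1"
    using True by simp
  ultimately show ?thesis
    using that by blast
next
  case False
  moreover have "size q \<noteq> 0"
    using fic_nonempty[OF T xq(1)] by simp
  ultimately have "size q = 1"
    by linarith
  then obtain y where q: "q = {#y#}"
    using size_1_singleton_mset by blast
  have "satisfies_period T 1"
    unfolding satisfies_period_def
  proof (intro allI impI)
    fix s :: word
    assume "s \<noteq> {#}"
    then show "(s, s + repeat_mset 1 s) \<in> T"
      using fic_subst[OF T xq(1), of "\<lambda>z. if z = y then s + s else s"] q xq(2) by auto
  qed
  then show ?thesis
    using that[of 1] by simp
qed

lemma satisfies_period_if_not_subset_nil:
  assumes T: "fic T" and "\<not> T \<subseteq> nil_theory 2"
  obtains m where "1 \<le> m" "satisfies_period T m"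
proof -
  obtain u v where uv: "(u, v) \<in> T" "(u, v) \<notin> nil_theory 2"
    using assms by auto
  then have "u \<noteq> v" "size u = 1 \<or> size v = 1"
    using fic_nonempty[OF T uv(1)] by (auto simp: nil_theory_iff nonempty_has_size)
  then obtain x q where "({#x#}, q) \<in> T" "q \<noteq> {#x#}"
    using uv(1) fic_sym[OF T uv(1)] size_1_singleton_mset by metis
  then show ?thesis
    using that satisfies_period_of_letter_pair[OF T] by blast
qed

lemma satisfies_period_mult:
  assumes T: "fic T" and "satisfies_period T m"
  shows "satisfies_period T (m * j)"
  unfolding satisfies_period_def
proof (intro allI impI)
  fix s :: word
  assume "s \<noteq> {#}"
  then show "(s, s + repeat_mset (m * j) s) \<in> T"
    using fic_absorb_repeat[OF T satisfies_periodD[OF assms(2)], of s j]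
    by (simp add: mult.commute)
qed

subsection \<open>Neutrality in terms of equational theories\<close>

lemma eq_closure_join_meets_subset:
  assumes "fic X" "fic Y" "fic Z"
  shows "eq_closure (X \<inter> Y \<union> Y \<inter> Z \<union> Z \<inter> X)
    \<subseteq> eq_closure (X \<union> Y) \<inter> eq_closure (Y \<union> Z) \<inter> eq_closure (Z \<union> X)"
proof (rule eq_closure_least)
  have "X \<union> Y \<subseteq> Words \<times> Words" "Y \<union> Z \<subseteq> Words \<times> Words" "Z \<union> X \<subseteq> Words \<times> Words"
    using assms fic_subset_Words by blast+
  then show "fic (eq_closure (X \<union> Y) \<inter> eq_closure (Y \<union> Z) \<inter> eq_closure (Z \<union> X))"
    by (intro fic_Int fic_eq_closure)
  show "X \<inter> Y \<union> Y \<inter> Z \<union> Z \<inter> X \<subseteq> eq_closure (X \<union> Y) \<inter> eq_closure (Y \<union> Z) \<inter> eq_closure (Z \<union> X)"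
    using eq_closure_upper[of "X \<union> Y"] eq_closure_upper[of "Y \<union> Z"] eq_closure_upper[of "Z \<union> X"]
    by blast
qed

lemma com_neutral_iff:
  assumes X: "fic X"
  shows "com_neutral X \<longleftrightarrow> (\<forall>Y Z. fic Y \<longrightarrow> fic Z \<longrightarrow>
    eq_closure (X \<union> Y) \<inter> eq_closure (Y \<union> Z) \<inter> eq_closure (Z \<union> X)
      \<subseteq> eq_closure (X \<inter> Y \<union> Y \<inter> Z \<union> Z \<inter> X))"
proof -
  have assoc: "eq_closure (eq_closure (X \<inter> Y \<union> Y \<inter> Z) \<union> Z \<inter> X)
      = eq_closure (X \<inter> Y \<union> Y \<inter> Z \<union> Z \<inter> X)" if "fic Y" "fic Z" for Y Z
    using X that fic_subset_Words by (intro eq_closure_Un_left) blast+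
  have "com_neutral X \<longleftrightarrow> (\<forall>Y Z. fic Y \<longrightarrow> fic Z \<longrightarrow>
      eq_closure (X \<inter> Y \<union> Y \<inter> Z \<union> Z \<inter> X)
        = eq_closure (X \<union> Y) \<inter> eq_closure (Y \<union> Z) \<inter> eq_closure (Z \<union> X))"
    unfolding com_neutral_def com_meet_def com_join_def using X assoc by simp
  then show ?thesis
    by (simp add: eq_closure_join_meets_subset[OF X, simplified] set_eq_subset)
qed

lemma com_neutralI:
  assumes X: "fic X"
    and one_inside: "\<And>Y Z. fic Y \<Longrightarrow> fic Z \<Longrightarrow> Y \<subseteq> X \<Longrightarrow> \<not> Z \<subseteq> X \<Longrightarrow>
      X \<inter> eq_closure (Y \<union> Z) \<subseteq> eq_closure (X \<inter> Y \<union> Y \<inter> Z \<union> Z \<inter> X)"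
    and none_inside: "\<And>Y Z. fic Y \<Longrightarrow> fic Z \<Longrightarrow> \<not> Y \<subseteq> X \<Longrightarrow> \<not> Z \<subseteq> X \<Longrightarrow>
      Y \<union> Z \<subseteq> eq_closure (X \<inter> Y \<union> Y \<inter> Z \<union> Z \<inter> X)"
  shows "com_neutral X"
  unfolding com_neutral_iff[OF X]
proof (intro allI impI)
  fix Y Z
  assume Y: "fic Y" and Z: "fic Z"
  let ?R = "eq_closure (X \<inter> Y \<union> Y \<inter> Z \<union> Z \<inter> X)"
  have R: "fic ?R"
    using fic_subset_Words[OF X] fic_subset_Words[OF Y] by (intro fic_eq_closure) blast
  have YZ: "eq_closure (Y \<union> Z) \<subseteq> ?R" if "Y \<union> Z \<subseteq> ?R"
    using that by (rule eq_closure_least[OF R])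
  consider "Y \<subseteq> X" "Z \<subseteq> X" | "Y \<subseteq> X" "\<not> Z \<subseteq> X" | "\<not> Y \<subseteq> X" "Z \<subseteq> X"
    | "\<not> Y \<subseteq> X" "\<not> Z \<subseteq> X"
    by blast
  then show "eq_closure (X \<union> Y) \<inter> eq_closure (Y \<union> Z) \<inter> eq_closure (Z \<union> X) \<subseteq> ?R"
  proof cases
    case 1
    then show ?thesis
      using YZ eq_closure_upper[of "X \<inter> Y \<union> Y \<inter> Z \<union> Z \<inter> X"] by blast
  next
    case 2
    then have "eq_closure (X \<union> Y) = X"
      using eq_closure_fic[OF X] by (simp add: Un_absorb2)
    then show ?thesis
      using one_inside[OF Y Z 2] by blast
  next
    case 3
    then have "eq_closure (Z \<union> X) = X"
      using eq_closure_fic[OF X] by (simp add: Un_absorb1)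
    moreover have "X \<inter> Z \<union> Z \<inter> Y \<union> Y \<inter> X = X \<inter> Y \<union> Y \<inter> Z \<union> Z \<inter> X" "Z \<union> Y = Y \<union> Z"
      by blast+
    ultimately show ?thesis
      using one_inside[OF Z Y 3(2,1)] by auto
  next
    case 4
    then show ?thesis
      using YZ none_inside[OF Y Z 4] by blast
  qed
qed

definition self_absorbing :: "(word \<times> word) set \<Rightarrow> word \<Rightarrow> bool" where
  "self_absorbing T p \<longleftrightarrow> (\<exists>f. f \<noteq> {#} \<and> set_mset f \<subseteq> set_mset p \<and> (p, p + f) \<in> T)"

lemma self_absorbing_if_new_letter:
  assumes T: "fic T" and pq: "(p, q) \<in> T" and y: "y \<in># q" "y \<notin># p"
  shows "self_absorbing T p"
proof -
  have p: "p \<noteq> {#}"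
    using fic_nonempty[OF T pq] by simp
  define \<sigma> where "\<sigma> = (\<lambda>z. if z \<in># p then {#z#} else p + p)"
  have \<sigma>: "\<forall>x. \<sigma> x \<noteq> {#}"
    unfolding \<sigma>_def using p by auto
  obtain q' where q: "q = add_mset y q'"
    using multi_member_split[OF y(1)] by blast
  have "subst \<sigma> p = p"
    by (rule subst_id_on) (simp add: \<sigma>_def)
  moreover have "subst \<sigma> q = p + (p + subst \<sigma> q')"
    using y(2) q by (simp add: \<sigma>_def)
  ultimately have "(p, p + (p + subst \<sigma> q')) \<in> T"
    using fic_subst[OF T pq \<sigma>] by simp
  moreover have "set_mset (subst \<sigma> q') \<subseteq> set_mset p"
    unfolding set_mset_subst \<sigma>_def by (auto split: if_splits)
  ultimately show ?thesis
    unfolding self_absorbing_def using p by (intro exI[of _ "p + subst \<sigma> q'"]) auto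
qed

lemma self_absorbing_add:
  assumes T: "fic T" and "self_absorbing T x"
  shows "self_absorbing T (x + w)"
proof -
  obtain f where f: "f \<noteq> {#}" "set_mset f \<subseteq> set_mset x" "(x, x + f) \<in> T"
    using assms(2) unfolding self_absorbing_def by blast
  have "(x + w, x + f + w) \<in> T"
    by (rule fic_add_right[OF T f(3)])
  then show ?thesis
    using f unfolding self_absorbing_def by (auto simp: add_ac)
qed

lemma self_absorbing_subst:
  assumes T: "fic T" and "self_absorbing T x" and \<sigma>: "\<forall>z. \<sigma> z \<noteq> {#}"
  shows "self_absorbing T (subst \<sigma> x)"
proof -
  obtain f where f: "f \<noteq> {#}" "set_mset f \<subseteq> set_mset x" "(x, x + f) \<in> T"
    using assms(2) unfolding self_absorbing_def by blast
  have "(subst \<sigma> x, subst \<sigma> x + subst \<sigma> f) \<in> T"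
    using fic_subst[OF T f(3) \<sigma>] by simp
  moreover have "subst \<sigma> f \<noteq> {#}"
    by (rule subst_nonempty[OF f(1) \<sigma>])
  moreover have "set_mset (subst \<sigma> f) \<subseteq> set_mset (subst \<sigma> x)"
    using f(2) unfolding set_mset_subst by auto
  ultimately show ?thesis
    unfolding self_absorbing_def by blast
qed

text \<open>Once \<open>u\<close> absorbs some nonempty \<open>f\<close>, the identity \<open>x\<^sup>a = x\<^sup>a y\<^sup>c\<close> with
  \<open>x := f\<close> lets \<open>u\<close> absorb \<open>w\<^sup>c\<close> for every word \<open>w\<close>.\<close>
lemma absorbs_repeat_any:
  assumes T: "fic T" and E: "satisfies_absorption T a c"
    and uf: "(u, u + f) \<in> T" and f: "f \<noteq> {#}" and w: "w \<noteq> {#}"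
  shows "(u, u + repeat_mset c w) \<in> T"
proof -
  have uaf: "(u, u + repeat_mset a f) \<in> T"
    by (rule fic_absorb_repeat[OF T uf])
  have "(u + repeat_mset a f, u + (repeat_mset a f + repeat_mset c w)) \<in> T"
    using fic_add_left[OF T satisfies_absorptionD[OF E f w]] .
  then have "(u, u + repeat_mset c w + repeat_mset a f) \<in> T"
    using fic_trans[OF T uaf] by (simp add: add_ac)
  moreover have "(u + repeat_mset c w + repeat_mset a f, u + repeat_mset c w) \<in> T"
    using fic_sym[OF T fic_add_right[OF T uaf, of "repeat_mset c w"]] by (simp add: add_ac)
  ultimately show ?thesis
    by (rule fic_trans[OF T])
qed

lemma absorbs_repeat_at_content_change:
  assumes T: "fic T" and E: "satisfies_absorption T a c"
    and pq: "(p, q) \<in> T" and content: "set_mset p \<noteq> set_mset q" and w: "w \<noteq> {#}"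
  shows "(p, p + repeat_mset c w) \<in> T" "(q, q + repeat_mset c w) \<in> T"
proof -
  have new: "(p, p + repeat_mset c w) \<in> T \<and> (q, q + repeat_mset c w) \<in> T"
    if pq: "(p, q) \<in> T" and y: "y \<in># q" "y \<notin># p" for p q y
  proof -
    obtain f where f: "f \<noteq> {#}" "(p, p + f) \<in> T"
      using self_absorbing_if_new_letter[OF T pq y] unfolding self_absorbing_def by blast
    have p: "(p, p + repeat_mset c w) \<in> T"
      by (rule absorbs_repeat_any[OF T E f(2) f(1) w])
    have "(q, p + repeat_mset c w) \<in> T"
      by (rule fic_trans[OF T fic_sym[OF T pq] p])
    then have "(q, q + repeat_mset c w) \<in> T"
      by (rule fic_trans[OF T _ fic_add_right[OF T pq]])
    with p show ?thesis ..
  qed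
  have "\<exists>y. y \<in># q \<and> y \<notin># p \<or> y \<in># p \<and> y \<notin># q"
    using content by blast
  then show "(p, p + repeat_mset c w) \<in> T" "(q, q + repeat_mset c w) \<in> T"
    using new[OF pq] new[OF fic_sym[OF T pq]] by blast+
qed

text \<open>Two theories satisfying the same absorption identity \<open>x\<^sup>a = x\<^sup>a y\<^sup>c\<close> are compared
  on identities \<open>u = v\<close> with equal content only: for different content, both
  \<open>u\<close> and \<open>v\<close> absorb \<open>(uv)\<^sup>c\<close>, and \<open>u (uv)\<^sup>c = v (uv)\<^sup>c\<close> has equal content.\<close>
lemma subset_if_content_part_subset:
  assumes T: "fic T" and R: "fic R" and TR: "T \<inter> content_theory \<subseteq> R"
    and ET: "satisfies_absorption T a c" and ER: "satisfies_absorption R a c" and c: "1 \<le> c"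
  shows "T \<subseteq> R"
proof safe
  fix u v
  assume t: "(u, v) \<in> T"
  have ne: "u \<noteq> {#}" "v \<noteq> {#}"
    using fic_nonempty[OF T t] by auto
  show "(u, v) \<in> R"
  proof (cases "set_mset u = set_mset v")
    case True
    then show ?thesis
      using TR t ne by (auto simp: content_theory_iff)
  next
    case False
    let ?U = "repeat_mset c u" and ?V = "repeat_mset c v"
    have in_R: "(w, w') \<in> R" if "(w, w') \<in> T" "set_mset w = set_mset w'" for w w'
      using TR that fic_nonempty[OF T that(1)] by (auto simp: content_theory_iff)
    have UV: "?U \<noteq> {#}" "?V \<noteq> {#}"
      using c ne by (auto simp: repeat_mset_eq_empty_iff)
    have uU: "(u, u + ?U) \<in> R"
      by (rule in_R[OF absorbs_repeat_at_content_change(1)[OF T ET t False ne(1)]]) (use c in auto)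
    have vV: "(v, v + ?V) \<in> R"
      by (rule in_R[OF absorbs_repeat_at_content_change(2)[OF T ET t False ne(2)]]) (use c in auto)
    have uV: "(u, u + ?V) \<in> R" and vU: "(v, v + ?U) \<in> R"
      using absorbs_repeat_any[OF R ER uU UV(1) ne(2)] absorbs_repeat_any[OF R ER vV UV(2) ne(1)] .
    have "(u + ?V, v) \<in> T"
      by (rule fic_trans[OF T fic_sym[OF T absorbs_repeat_at_content_change(1)[OF T ET t False ne(2)]] t])
    then have "(u + ?V, v + ?U) \<in> T"
      by (rule fic_trans[OF T _ absorbs_repeat_at_content_change(2)[OF T ET t False ne(1)]])
    then have "(u + ?V, v + ?U) \<in> R"
      by (rule in_R) (use c False in auto)
    then show ?thesis
      using fic_trans[OF R fic_trans[OF R uV] fic_sym[OF R vU]] by blast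
  qed
qed

subsection \<open>$\mathcal{SL}$ is neutral\<close>

text \<open>The theory \<open>extension\<close> contains \<open>R\<close> and \<open>Z\<close> but adds no content-preserving
  identity to \<open>R\<close>; its new identities \<open>p = q\<close> are those which hold in \<open>R\<close> after
  multiplying by the \<open>c\<close>-th power of any word covering the content of \<open>p\<close> and \<open>q\<close>.\<close>
locale content_extension =
  fixes R Z :: "(word \<times> word) set" and a c :: nat
  assumes fic_R: "fic R" and fic_Z: "fic Z"
    and R_subset: "R \<subseteq> content_theory" and Z_content_part: "Z \<inter> content_theory \<subseteq> R"
    and absorption: "satisfies_absorption Z a c" and a_pos: "1 \<le> a" and c_pos: "1 \<le> c"
begin

definition stably_related :: "word \<Rightarrow> word \<Rightarrow> bool" where
  "stably_related p q \<longleftrightarrow> self_absorbing R p \<and> self_absorbing R q \<and>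
    (\<forall>m. m \<noteq> {#} \<longrightarrow> set_mset p \<union> set_mset q \<subseteq> set_mset m \<longrightarrow>
      (p + repeat_mset c m, q + repeat_mset c m) \<in> R)"

definition extension :: "(word \<times> word) set" where
  "extension = {(p, q). p \<noteq> {#} \<and> q \<noteq> {#} \<and> ((p, q) \<in> R \<or> stably_related p q)}"

lemma set_mset_eq_if_R: "(p, q) \<in> R \<Longrightarrow> set_mset p = set_mset q"
  using R_subset by (auto simp: content_theory_iff)

lemma R_if_Z_same_content: "(p, q) \<in> Z \<Longrightarrow> set_mset p = set_mset q \<Longrightarrow> (p, q) \<in> R"
  using Z_content_part fic_nonempty[OF fic_Z, of p q] by (auto simp: content_theory_iff)

lemma self_absorbing_absorbs_power:
  assumes A: "self_absorbing R p" and n: "n \<noteq> {#}" and sn: "set_mset n \<subseteq> set_mset (p + w)"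
  shows "(p + w, p + w + repeat_mset c n) \<in> R"
proof -
  obtain f where f: "f \<noteq> {#}" "set_mset f \<subseteq> set_mset p" "(p, p + f) \<in> R"
    using A unfolding self_absorbing_def by blast
  let ?F = "repeat_mset a f"
  have "(p + w, p + ?F + w) \<in> R"
    using fic_add_right[OF fic_R fic_absorb_repeat[OF fic_R f(3)]] .
  then have pF: "(p + w, p + w + ?F) \<in> R"
    by (simp add: add_ac)
  have "(?F + (p + w), ?F + repeat_mset c n + (p + w)) \<in> Z"
    using fic_add_right[OF fic_Z satisfies_absorptionD[OF absorption f(1) n]] .
  moreover have "set_mset (?F + (p + w)) = set_mset (?F + repeat_mset c n + (p + w))"
    using a_pos c_pos f(2) sn by auto
  ultimately have "(p + w + ?F, p + w + ?F + repeat_mset c n) \<in> R"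
    using R_if_Z_same_content by (simp add: add_ac)
  moreover have "(p + w + ?F + repeat_mset c n, p + w + repeat_mset c n) \<in> R"
    using fic_sym[OF fic_R fic_add_right[OF fic_R pF, of "repeat_mset c n"]] .
  ultimately show ?thesis
    using fic_trans[OF fic_R fic_trans[OF fic_R pF]] by blast
qed

lemma self_absorbing_R_cong: "(p, q) \<in> R \<Longrightarrow> self_absorbing R q \<Longrightarrow> self_absorbing R p"
proof -
  assume pq: "(p, q) \<in> R" and "self_absorbing R q"
  then obtain f where f: "f \<noteq> {#}" "set_mset f \<subseteq> set_mset q" "(q, q + f) \<in> R"
    unfolding self_absorbing_def by blast
  have "(p, q + f) \<in> R"
    by (rule fic_trans[OF fic_R pq f(3)])
  then have "(p, p + f) \<in> R"
    by (rule fic_trans[OF fic_R _ fic_add_right[OF fic_R fic_sym[OF fic_R pq]]])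
  then show "self_absorbing R p"
    using f set_mset_eq_if_R[OF pq] unfolding self_absorbing_def by auto
qed

lemma stably_related_sym: "stably_related p q \<Longrightarrow> stably_related q p"
  unfolding stably_related_def using fic_sym[OF fic_R] by (metis sup_commute)

lemma stably_related_R_left:
  assumes pq: "(p, q) \<in> R" and qr: "stably_related q r"
  shows "stably_related p r"
  unfolding stably_related_def
proof (intro conjI allI impI)
  show "self_absorbing R p" "self_absorbing R r"
    using self_absorbing_R_cong[OF pq] qr unfolding stably_related_def by blast+
  fix m
  assume "m \<noteq> {#}" "set_mset p \<union> set_mset r \<subseteq> set_mset m"
  then have "(q + repeat_mset c m, r + repeat_mset c m) \<in> R"
    using qr set_mset_eq_if_R[OF pq] unfolding stably_related_def by auto
  then show "(p + repeat_mset c m, r + repeat_mset c m) \<in> R"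
    by (rule fic_trans[OF fic_R fic_add_right[OF fic_R pq]])
qed

lemma stably_related_trans:
  assumes pq: "stably_related p q" and qr: "stably_related q r"
  shows "stably_related p r"
  unfolding stably_related_def
proof (intro conjI allI impI)
  show p: "self_absorbing R p" and r: "self_absorbing R r"
    using pq qr unfolding stably_related_def by blast+
  fix m
  assume m: "m \<noteq> {#}" "set_mset p \<union> set_mset r \<subseteq> set_mset m"
  have q: "q \<noteq> {#}"
    using qr fic_nonempty[OF fic_R] unfolding stably_related_def self_absorbing_def by blast
  have "m + q \<noteq> {#}" "set_mset p \<union> set_mset q \<subseteq> set_mset (m + q)"
    "set_mset q \<union> set_mset r \<subseteq> set_mset (m + q)"
    using m by auto
  then have "(p + repeat_mset c (m + q), q + repeat_mset c (m + q)) \<in> R"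
    "(q + repeat_mset c (m + q), r + repeat_mset c (m + q)) \<in> R"
    using pq qr unfolding stably_related_def by blast+
  then have "(p + repeat_mset c (m + q), r + repeat_mset c (m + q)) \<in> R"
    by (rule fic_trans[OF fic_R])
  then have padded: "(p + repeat_mset c m + repeat_mset c q, r + repeat_mset c m + repeat_mset c q) \<in> R"
    by (simp add: add_ac)
  text \<open>Letters outside \<open>m\<close> are replaced by \<open>m\<close>, turning the padding \<open>q\<^sup>c\<close> into a word
    of content within \<open>m\<close>, which \<open>p m\<^sup>c\<close> and \<open>r m\<^sup>c\<close> absorb.\<close>
  define \<tau> where "\<tau> = (\<lambda>z. if z \<in># m then {#z#} else m)"
  have \<tau>: "\<forall>x. \<tau> x \<noteq> {#}"
    unfolding \<tau>_def using m by auto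
  have "subst \<tau> p = p" "subst \<tau> r = r" "subst \<tau> m = m"
    using m by (auto intro!: subst_id_on simp: \<tau>_def)
  then have "(p + repeat_mset c m + repeat_mset c (subst \<tau> q),
      r + repeat_mset c m + repeat_mset c (subst \<tau> q)) \<in> R"
    using fic_subst[OF fic_R padded \<tau>] by simp
  moreover have "set_mset (subst \<tau> q) \<subseteq> set_mset m"
    unfolding set_mset_subst \<tau>_def by (auto split: if_splits)
  then have "(s + repeat_mset c m, s + repeat_mset c m + repeat_mset c (subst \<tau> q)) \<in> R"
    if "self_absorbing R s" for s
    using self_absorbing_absorbs_power[OF that subst_nonempty[OF q \<tau>], of "repeat_mset c m"] c_pos
    by auto
  ultimately show "(p + repeat_mset c m, r + repeat_mset c m) \<in> R"
    using fic_trans[OF fic_R fic_trans[OF fic_R] fic_sym[OF fic_R]] p r by blast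
qed

lemma stably_related_R_right: "stably_related p q \<Longrightarrow> (q, r) \<in> R \<Longrightarrow> stably_related p r"
  using stably_related_R_left[OF fic_sym[OF fic_R]] stably_related_sym by blast

lemma extension_trans:
  assumes pq: "(p, q) \<in> extension" and qr: "(q, r) \<in> extension"
  shows "(p, r) \<in> extension"
proof -
  have "(p, q) \<in> R \<or> stably_related p q" "(q, r) \<in> R \<or> stably_related q r"
    using pq qr unfolding extension_def by blast+
  then have "(p, r) \<in> R \<or> stably_related p r"
    using fic_trans[OF fic_R] stably_related_R_left stably_related_R_right stably_related_trans
    by blast
  then show ?thesis
    using pq qr unfolding extension_def by blast
qed

lemma extension_add:
  assumes uv: "(u, v) \<in> extension" and w: "w \<noteq> {#}"
  shows "(u + w, v + w) \<in> extension"
proof -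
  have "(u + w, v + w) \<in> R \<or> stably_related (u + w) (v + w)"
  proof (cases "(u, v) \<in> R")
    case True
    then show ?thesis using fic_add_right[OF fic_R] by blast
  next
    case False
    then have uv: "stably_related u v"
      using uv unfolding extension_def by auto
    have "(u + w + repeat_mset c m, v + w + repeat_mset c m) \<in> R"
      if "m \<noteq> {#}" "set_mset (u + w) \<union> set_mset (v + w) \<subseteq> set_mset m" for m
    proof -
      have "(u + repeat_mset c m, v + repeat_mset c m) \<in> R"
        using uv that unfolding stably_related_def by auto
      then have "(u + repeat_mset c m + w, v + repeat_mset c m + w) \<in> R"
        by (rule fic_add_right[OF fic_R])
      then show ?thesis
        by (simp add: add_ac)
    qed
    then show ?thesis
      using uv self_absorbing_add[OF fic_R] unfolding stably_related_def by blast
  qed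
  then show ?thesis
    using uv w unfolding extension_def by auto
qed

lemma extension_subst:
  assumes \<sigma>: "\<forall>x. \<sigma> x \<noteq> {#}" and uv: "(u, v) \<in> extension"
  shows "(subst \<sigma> u, subst \<sigma> v) \<in> extension"
proof -
  have u: "u \<noteq> {#}"
    using uv unfolding extension_def by auto
  have ne: "subst \<sigma> u \<noteq> {#}" "subst \<sigma> v \<noteq> {#}"
    using uv subst_nonempty[OF _ \<sigma>] unfolding extension_def by auto
  have "(subst \<sigma> u, subst \<sigma> v) \<in> R \<or> stably_related (subst \<sigma> u) (subst \<sigma> v)"
  proof (cases "(u, v) \<in> R")
    case True
    then show ?thesis using fic_subst[OF fic_R _ \<sigma>] by blast
  next
    case False
    then have uv: "stably_related u v"
      using uv unfolding extension_def by auto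
    have A: "self_absorbing R (subst \<sigma> u)" "self_absorbing R (subst \<sigma> v)"
      using uv self_absorbing_subst[OF fic_R _ \<sigma>] unfolding stably_related_def by blast+
    let ?N = "repeat_mset c (subst \<sigma> (u + v))"
    have "(subst \<sigma> u + repeat_mset c m, subst \<sigma> v + repeat_mset c m) \<in> R"
      if m: "m \<noteq> {#}" "set_mset (subst \<sigma> u) \<union> set_mset (subst \<sigma> v) \<subseteq> set_mset m" for m
    proof -
      text \<open>Pad with \<open>(u v)\<^sup>c\<close> before substituting, then absorb its image.\<close>
      have "u + v \<noteq> {#}" "set_mset u \<union> set_mset v \<subseteq> set_mset (u + v)"
        using u by auto
      then have "(u + repeat_mset c (u + v), v + repeat_mset c (u + v)) \<in> R"
        using uv unfolding stably_related_def by blast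
      then have "(subst \<sigma> u + ?N, subst \<sigma> v + ?N) \<in> R"
        using fic_subst[OF fic_R _ \<sigma>] by fastforce
      then have "(subst \<sigma> u + ?N + repeat_mset c m, subst \<sigma> v + ?N + repeat_mset c m) \<in> R"
        by (rule fic_add_right[OF fic_R])
      then have "(subst \<sigma> u + repeat_mset c m + ?N, subst \<sigma> v + repeat_mset c m + ?N) \<in> R"
        by (simp add: add_ac)
      moreover have "(s + repeat_mset c m, s + repeat_mset c m + ?N) \<in> R"
        if "self_absorbing R s" for s
        using self_absorbing_absorbs_power[OF that _, of "subst \<sigma> (u + v)" "repeat_mset c m"]
          ne m c_pos by auto
      ultimately show ?thesis
        using A fic_trans[OF fic_R fic_trans[OF fic_R] fic_sym[OF fic_R]] by blast
    qed
    then show ?thesis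
      using A unfolding stably_related_def by blast
  qed
  then show ?thesis
    using ne unfolding extension_def by auto
qed

lemma fic_extension: "fic extension"
proof (rule ficI)
  show "extension \<subseteq> Words \<times> Words"
    unfolding extension_def by auto
  show "(u, u) \<in> extension" if "u \<noteq> {#}" for u
    using that fic_refl[OF fic_R] unfolding extension_def by auto
  show "(v, u) \<in> extension" if "(u, v) \<in> extension" for u v
    using that fic_sym[OF fic_R] stably_related_sym unfolding extension_def by blast
qed (use extension_trans extension_add extension_subst in blast)+

lemma R_subset_extension: "R \<subseteq> extension"
  unfolding extension_def using fic_nonempty[OF fic_R] by auto

lemma Z_subset_extension: "Z \<subseteq> extension"
proof safe
  fix p q
  assume z: "(p, q) \<in> Z"
  have ne: "p \<noteq> {#}" "q \<noteq> {#}"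
    using fic_nonempty[OF fic_Z z] by auto
  show "(p, q) \<in> extension"
  proof (cases "set_mset p = set_mset q")
    case True
    then show ?thesis
      using R_if_Z_same_content[OF z] R_subset_extension by blast
  next
    case False
    have "self_absorbing R s" if "(s, s + repeat_mset c s) \<in> Z" "s \<noteq> {#}" for s
      unfolding self_absorbing_def using R_if_Z_same_content[OF that(1)] that(2) c_pos
      by (intro exI[of _ "repeat_mset c s"]) (auto simp: repeat_mset_eq_empty_iff)
    then have "self_absorbing R p" "self_absorbing R q"
      using absorbs_repeat_at_content_change[OF fic_Z absorption z False] ne by blast+
    moreover have "(p + repeat_mset c m, q + repeat_mset c m) \<in> R"
      if "set_mset p \<union> set_mset q \<subseteq> set_mset m" for m
      using R_if_Z_same_content[OF fic_add_right[OF fic_Z z], of "repeat_mset c m"] that c_pos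
      by auto
    ultimately show ?thesis
      using ne unfolding extension_def stably_related_def by auto
  qed
qed

lemma extension_content_part: "extension \<inter> content_theory \<subseteq> R"
proof safe
  fix u v
  assume "(u, v) \<in> extension" "(u, v) \<in> content_theory"
  then consider "(u, v) \<in> R" | "stably_related u v" "u \<noteq> {#}" "set_mset u = set_mset v"
    unfolding extension_def content_theory_def by blast
  then show "(u, v) \<in> R"
  proof cases
    case 2
    text \<open>Take \<open>m = u\<close> and absorb \<open>u\<^sup>c\<close> on both sides.\<close>
    then have "(u + repeat_mset c u, v + repeat_mset c u) \<in> R"
      "(u, u + repeat_mset c u) \<in> R" "(v, v + repeat_mset c u) \<in> R"
      using self_absorbing_absorbs_power[of _ u "{#}"] unfolding stably_related_def by auto
    then show ?thesis
      using fic_trans[OF fic_R fic_trans[OF fic_R] fic_sym[OF fic_R]] by blast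
  qed
qed

end

lemma SL_one_inside:
  assumes Y: "fic Y" and Z: "fic Z" and YS: "Y \<subseteq> content_theory" and ZS: "\<not> Z \<subseteq> content_theory"
  shows "content_theory \<inter> eq_closure (Y \<union> Z)
    \<subseteq> eq_closure (content_theory \<inter> Y \<union> Y \<inter> Z \<union> Z \<inter> content_theory)"
proof -
  define R where "R = eq_closure (content_theory \<inter> Y \<union> Y \<inter> Z \<union> Z \<inter> content_theory)"
  have R: "fic R"
    unfolding R_def using fic_subset_Words[OF Y] fic_subset_Words[OF fic_content_theory]
    by (intro fic_eq_closure) blast
  have R_upper: "content_theory \<inter> Y \<union> Y \<inter> Z \<union> Z \<inter> content_theory \<subseteq> R"
    unfolding R_def by (rule eq_closure_upper)
  have "R \<subseteq> content_theory"
    unfolding R_def using YS by (intro eq_closure_least[OF fic_content_theory]) blast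
  moreover obtain a c where "1 \<le> a" "1 \<le> c" "satisfies_absorption Z a c"
    using satisfies_absorption_if_not_subset_content[OF Z ZS] .
  ultimately interpret content_extension R Z a c
    using R Z R_upper by unfold_locales blast+
  have "eq_closure (Y \<union> Z) \<subseteq> extension"
    using YS R_upper R_subset_extension Z_subset_extension
    by (intro eq_closure_least[OF fic_extension]) blast
  then show ?thesis
    using extension_content_part unfolding R_def[symmetric] by blast
qed

lemma SL_none_inside:
  assumes Y: "fic Y" and Z: "fic Z" and "\<not> Y \<subseteq> content_theory" "\<not> Z \<subseteq> content_theory"
  shows "Y \<union> Z \<subseteq> eq_closure (content_theory \<inter> Y \<union> Y \<inter> Z \<union> Z \<inter> content_theory)"
proof -
  define R where "R = eq_closure (content_theory \<inter> Y \<union> Y \<inter> Z \<union> Z \<inter> content_theory)"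
  have R: "fic R"
    unfolding R_def using fic_subset_Words[OF Y] fic_subset_Words[OF fic_content_theory]
    by (intro fic_eq_closure) blast
  have R_upper: "content_theory \<inter> Y \<union> Y \<inter> Z \<union> Z \<inter> content_theory \<subseteq> R"
    unfolding R_def by (rule eq_closure_upper)
  obtain a c where "1 \<le> c" "satisfies_absorption Y a c"
    using satisfies_absorption_if_not_subset_content[OF Y assms(3)] .
  moreover obtain a' c' where "1 \<le> c'" "satisfies_absorption Z a' c'"
    using satisfies_absorption_if_not_subset_content[OF Z assms(4)] .
  ultimately have c: "1 \<le> c * c'" and YZ: "satisfies_absorption (Y \<inter> Z) (a + a') (c * c')"
    using satisfies_absorption_Int[OF Y Z] by auto
  have "satisfies_absorption R (a + a') (c * c')"
    using satisfies_absorption_mono[OF YZ] R_upper by blast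
  moreover have "satisfies_absorption Y (a + a') (c * c')" "satisfies_absorption Z (a + a') (c * c')"
    using satisfies_absorption_mono[OF YZ] by blast+
  ultimately have "Y \<subseteq> R" "Z \<subseteq> R"
    using subset_if_content_part_subset[OF _ R _ _ _ c] Y Z R_upper by blast+
  then show ?thesis
    unfolding R_def by blast
qed

theorem com_neutral_SL: "com_neutral SL"
  unfolding SL_eq using fic_content_theory SL_one_inside SL_none_inside by (rule com_neutralI)

subsection \<open>$\mathcal{ZM}$ is neutral\<close>

definition power_preimage :: "nat \<Rightarrow> (word \<times> word) set \<Rightarrow> (word \<times> word) set" where
  "power_preimage n R = {(p, q). p \<noteq> {#} \<and> q \<noteq> {#} \<and> (repeat_mset n p, repeat_mset n q) \<in> R}"

lemma fic_power_preimage: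
  assumes R: "fic R" and n: "0 < n"
  shows "fic (power_preimage n R)"
proof (rule ficI)
  have nonempty: "repeat_mset n w \<noteq> {#} \<longleftrightarrow> w \<noteq> {#}" for w
    using n by (simp add: repeat_mset_eq_empty_iff)
  show "power_preimage n R \<subseteq> Words \<times> Words"
    unfolding power_preimage_def by auto
  show "(u, u) \<in> power_preimage n R" if "u \<noteq> {#}" for u
    using that fic_refl[OF R, of "repeat_mset n u"] unfolding power_preimage_def by (simp add: nonempty)
  show "(v, u) \<in> power_preimage n R" if "(u, v) \<in> power_preimage n R" for u v
    using that fic_sym[OF R] unfolding power_preimage_def by simp
  show "(u, w) \<in> power_preimage n R"
    if "(u, v) \<in> power_preimage n R" "(v, w) \<in> power_preimage n R" for u v w
    using that fic_trans[OF R, of "repeat_mset n u" "repeat_mset n v" "repeat_mset n w"]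
    unfolding power_preimage_def by simp
  show "(u + w, v + w) \<in> power_preimage n R"
    if "(u, v) \<in> power_preimage n R" "w \<noteq> {#}" for u v w
    using that fic_add_right[OF R, of "repeat_mset n u" "repeat_mset n v" "repeat_mset n w"]
    unfolding power_preimage_def by simp
  show "(subst \<sigma> u, subst \<sigma> v) \<in> power_preimage n R"
    if \<sigma>: "\<forall>x. \<sigma> x \<noteq> {#}" and "(u, v) \<in> power_preimage n R" for \<sigma> u v
    using that fic_subst[OF R _ \<sigma>, of "repeat_mset n u" "repeat_mset n v"] subst_nonempty[OF _ \<sigma>]
    unfolding power_preimage_def by (simp add: nonempty)
qed

lemma repeat_mset_in_nil_theory_2:
  assumes "2 \<le> n" "u \<noteq> {#}" "v \<noteq> {#}"
  shows "(repeat_mset n u, repeat_mset n v) \<in> nil_theory 2"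
proof -
  have "1 \<le> size u" "1 \<le> size v"
    using assms(2,3) by (simp_all add: Suc_le_eq nonempty_has_size)
  then have "2 * 1 \<le> n * size u" "2 * 1 \<le> n * size v"
    using mult_le_mono[OF assms(1)] by blast+
  then show ?thesis
    using assms by (simp add: nil_theory_iff size_repeat_mset repeat_mset_eq_empty_iff)
qed

text \<open>Under \<open>x = x\<^sup>M\<^sup>+\<^sup>1\<close>, every identity \<open>u = v\<close>
  follows from \<open>u\<^sup>M\<^sup>+\<^sup>1 = v\<^sup>M\<^sup>+\<^sup>1\<close>, which lies in \<open>ZM\<close>'s theory.\<close>
lemma subset_if_nil_part_subset:
  assumes T: "fic T" and R: "fic R" and TR: "T \<inter> nil_theory 2 \<subseteq> R"
    and E: "satisfies_period R M" and M: "1 \<le> M"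
  shows "T \<subseteq> R"
proof safe
  fix u v
  assume t: "(u, v) \<in> T"
  note ne = fic_nonempty[OF T t]
  have "(repeat_mset (Suc M) u, repeat_mset (Suc M) v) \<in> T \<inter> nil_theory 2"
    using fic_repeat_mset[OF T t] repeat_mset_in_nil_theory_2[OF _ ne, of "Suc M"] M by simp
  then have "(repeat_mset (Suc M) u, repeat_mset (Suc M) v) \<in> R"
    using TR by blast
  moreover have "(u, repeat_mset (Suc M) u) \<in> R" "(v, repeat_mset (Suc M) v) \<in> R"
    using satisfies_periodD[OF E] ne by auto
  ultimately show "(u, v) \<in> R"
    using fic_trans[OF R fic_trans[OF R] fic_sym[OF R]] by blast
qed

lemma ZM_one_inside:
  assumes Y: "fic Y" and Z: "fic Z" and YN: "Y \<subseteq> nil_theory 2" and ZN: "\<not> Z \<subseteq> nil_theory 2"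
  shows "nil_theory 2 \<inter> eq_closure (Y \<union> Z)
    \<subseteq> eq_closure (nil_theory 2 \<inter> Y \<union> Y \<inter> Z \<union> Z \<inter> nil_theory 2)"
proof -
  define R where "R = eq_closure (nil_theory 2 \<inter> Y \<union> Y \<inter> Z \<union> Z \<inter> nil_theory 2)"
  have R: "fic R"
    unfolding R_def using fic_subset_Words[OF Y] fic_subset_Words[OF fic_nil_theory]
    by (intro fic_eq_closure) blast
  have R_upper: "nil_theory 2 \<inter> Y \<union> Y \<inter> Z \<union> Z \<inter> nil_theory 2 \<subseteq> R"
    unfolding R_def by (rule eq_closure_upper)
  obtain m where m: "1 \<le> m" "satisfies_period Z m"
    using satisfies_period_if_not_subset_nil[OF Z ZN] .
  let ?Q = "power_preimage (Suc m) R"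
  have "Y \<subseteq> ?Q"
  proof safe
    fix u v
    assume "(u, v) \<in> Y"
    then have "(u, v) \<in> R"
      using YN R_upper by blast
    then show "(u, v) \<in> ?Q"
      using fic_repeat_mset[OF R] fic_nonempty[OF R] unfolding power_preimage_def by blast
  qed
  moreover have "Z \<subseteq> ?Q"
  proof safe
    fix u v
    assume z: "(u, v) \<in> Z"
    note ne = fic_nonempty[OF Z z]
    have "(repeat_mset (Suc m) u, repeat_mset (Suc m) v) \<in> Z \<inter> nil_theory 2"
      using fic_repeat_mset[OF Z z] repeat_mset_in_nil_theory_2[OF _ ne, of "Suc m"] m(1) by simp
    then show "(u, v) \<in> ?Q"
      using R_upper ne unfolding power_preimage_def by blast
  qed
  ultimately have "eq_closure (Y \<union> Z) \<subseteq> ?Q"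
    by (intro eq_closure_least fic_power_preimage R) auto
  moreover have "(u, v) \<in> R" if "(u, v) \<in> ?Q" "(u, v) \<in> nil_theory 2" for u v
  proof (cases "u = v")
    case True
    then show ?thesis using fic_refl[OF R] that(2) by (simp add: nil_theory_iff)
  next
    case False
    text \<open>Both \<open>u\<close> and \<open>v\<close> are long, so \<open>u = u\<^sup>m\<^sup>+\<^sup>1\<close> lies in
      \<open>Z \<inter> nil_theory 2 \<subseteq> R\<close>.\<close>
    then have long: "2 \<le> size u" "2 \<le> size v" "u \<noteq> {#}" "v \<noteq> {#}"
      using that(2) by (auto simp: nil_theory_iff)
    have "(s, repeat_mset (Suc m) s) \<in> R" if "2 \<le> size s" "s \<noteq> {#}" for s
    proof -
      have "(s, repeat_mset (Suc m) s) \<in> Z \<inter> nil_theory 2"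
        using satisfies_periodD[OF m(2) that(2)] that by (simp add: nil_theory_iff)
      then show ?thesis
        using R_upper by blast
    qed
    then show ?thesis
      using long that(1) fic_trans[OF R fic_trans[OF R] fic_sym[OF R]]
      unfolding power_preimage_def by blast
  qed
  ultimately show ?thesis
    unfolding R_def[symmetric] by auto
qed

lemma ZM_none_inside:
  assumes Y: "fic Y" and Z: "fic Z" and "\<not> Y \<subseteq> nil_theory 2" "\<not> Z \<subseteq> nil_theory 2"
  shows "Y \<union> Z \<subseteq> eq_closure (nil_theory 2 \<inter> Y \<union> Y \<inter> Z \<union> Z \<inter> nil_theory 2)"
proof -
  define R where "R = eq_closure (nil_theory 2 \<inter> Y \<union> Y \<inter> Z \<union> Z \<inter> nil_theory 2)"
  have R: "fic R"
    unfolding R_def using fic_subset_Words[OF Y] fic_subset_Words[OF fic_nil_theory]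
    by (intro fic_eq_closure) blast
  have R_upper: "nil_theory 2 \<inter> Y \<union> Y \<inter> Z \<union> Z \<inter> nil_theory 2 \<subseteq> R"
    unfolding R_def by (rule eq_closure_upper)
  obtain m where "1 \<le> m" "satisfies_period Y m"
    using satisfies_period_if_not_subset_nil[OF Y assms(3)] .
  moreover obtain m' where "1 \<le> m'" "satisfies_period Z m'"
    using satisfies_period_if_not_subset_nil[OF Z assms(4)] .
  ultimately have "1 \<le> m * m'" "satisfies_period (Y \<inter> Z) (m * m')"
    using satisfies_period_mult[OF Y, of m m'] satisfies_period_mult[OF Z, of m' m]
    unfolding satisfies_period_def by (auto simp: mult.commute)
  moreover have "satisfies_period R (m * m')"
    using satisfies_period_mono calculation(2) R_upper by blast
  ultimately have "Y \<subseteq> R" "Z \<subseteq> R"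
    using subset_if_nil_part_subset[OF _ R] Y Z R_upper by blast+
  then show ?thesis
    unfolding R_def by blast
qed

theorem com_neutral_ZM: "com_neutral ZM"
  unfolding ZM_eq using fic_nil_theory ZM_one_inside ZM_none_inside by (rule com_neutralI)

subsection \<open>No other atom is neutral\<close>

definition cube_swap :: "word \<Rightarrow> word \<Rightarrow> bool" where
  "cube_swap u v \<longleftrightarrow> (\<exists>a b. a \<noteq> b \<and> u = {#a, a, b#} \<and> v = {#a, b, b#})"

text \<open>The theory of \<open>var{x\<^sup>2y = xy\<^sup>2, x\<^sub>1x\<^sub>2x\<^sub>3x\<^sub>4 = y\<^sub>1y\<^sub>2y\<^sub>3y\<^sub>4}\<close>.\<close>
definition swap_theory :: "(word \<times> word) set" where
  "swap_theory = nil_theory 4 \<union> {(u, v). cube_swap u v}"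

lemma cube_swap_size: "cube_swap u v \<Longrightarrow> size u = 3 \<and> size v = 3"
  unfolding cube_swap_def by auto

lemma cube_swap_sym: "cube_swap u v \<Longrightarrow> cube_swap v u"
  unfolding cube_swap_def by (metis add_mset_commute)

lemma cube_swap_trans: "cube_swap u v \<Longrightarrow> cube_swap v w \<Longrightarrow> u = w"
proof -
  assume "cube_swap u v" "cube_swap v w"
  then obtain a b a' b' where ab: "a \<noteq> b" "u = {#a, a, b#}" "v = {#a, b, b#}"
    and ab': "a' \<noteq> b'" "v = {#a', a', b'#}" "w = {#a', b', b'#}"
    unfolding cube_swap_def by blast
  have "{#a, b, b#} = {#a', a', b'#}"
    using ab(3) ab'(2) by simp
  then have cb: "count {#a, b, b#} b = count {#a', a', b'#} b"
    and ca: "count {#a, b, b#} a = count {#a', a', b'#} a"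
    by simp_all
  from cb ab(1) ab'(1) have "a' = b"
    by (auto split: if_splits)
  with ca ab(1) ab'(1) have "a' = b \<and> b' = a"
    by (auto split: if_splits)
  then show "u = w"
    using ab ab' by (simp add: add_mset_commute)
qed

lemma swap_theory_iff:
  "(u, v) \<in> swap_theory \<longleftrightarrow> (u, v) \<in> nil_theory 4 \<or> cube_swap u v"
  by (simp add: swap_theory_def)

lemma fic_swap_theory: "fic swap_theory"
proof (rule ficI)
  show "swap_theory \<subseteq> Words \<times> Words"
    using fic_subset_Words[OF fic_nil_theory] cube_swap_size
    unfolding swap_theory_def by fastforce
  show "(u, u) \<in> swap_theory" if "u \<noteq> {#}" for u
    using that by (simp add: swap_theory_iff nil_theory_iff)
  show "(v, u) \<in> swap_theory" if "(u, v) \<in> swap_theory" for u v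
    using that fic_sym[OF fic_nil_theory] cube_swap_sym by (auto simp: swap_theory_iff)
  show "(u, w) \<in> swap_theory" if uv: "(u, v) \<in> swap_theory" and vw: "(v, w) \<in> swap_theory" for u v w
  proof (cases "cube_swap u v \<or> cube_swap v w")
    case True
    text \<open>A swap has length 3, so it composes only with trivial identities.\<close>
    then show ?thesis
      using uv vw cube_swap_trans[of u v w] cube_swap_size[of u v] cube_swap_size[of v w]
      by (auto simp: swap_theory_iff nil_theory_iff)
  next
    case False
    then show ?thesis
      using uv vw fic_trans[OF fic_nil_theory[of 4]] by (simp add: swap_theory_iff)
  qed
  show "(u + w, v + w) \<in> swap_theory" if "(u, v) \<in> swap_theory" "w \<noteq> {#}" for u v w
  proof -
    have "1 \<le> size w"
      using that(2) by (simp add: Suc_le_eq nonempty_has_size)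
    then show ?thesis
      using that fic_add_right[OF fic_nil_theory] cube_swap_size[of u v]
      by (auto simp: swap_theory_iff nil_theory_iff)
  qed
  show "(subst \<sigma> u, subst \<sigma> v) \<in> swap_theory"
    if \<sigma>: "\<forall>x. \<sigma> x \<noteq> {#}" and uv: "(u, v) \<in> swap_theory" for \<sigma> u v
  proof (cases "cube_swap u v")
    case True
    then obtain a b where ab: "a \<noteq> b" "u = {#a, a, b#}" "v = {#a, b, b#}"
      unfolding cube_swap_def by blast
    show ?thesis
    proof (cases "size (\<sigma> a) = 1 \<and> size (\<sigma> b) = 1")
      case True
      then obtain a' b' where "\<sigma> a = {#a'#}" "\<sigma> b = {#b'#}"
        using size_1_singleton_mset by metis
      then have "subst \<sigma> u = {#a', a', b'#}" "subst \<sigma> v = {#a', b', b'#}"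
        using ab by auto
      then show ?thesis
        by (cases "a' = b'") (auto simp: swap_theory_iff nil_theory_iff cube_swap_def)
    next
      case False
      moreover have "1 \<le> size (\<sigma> a)" "1 \<le> size (\<sigma> b)"
        using \<sigma> by (simp_all add: Suc_le_eq nonempty_has_size)
      ultimately have "4 \<le> size (subst \<sigma> u)" "4 \<le> size (subst \<sigma> v)"
        using ab by auto
      then show ?thesis
        using subst_nonempty[OF _ \<sigma>] ab by (auto simp: swap_theory_iff nil_theory_iff)
    qed
  next
    case False
    then show ?thesis
      using uv fic_subst[OF fic_nil_theory _ \<sigma>] by (simp add: swap_theory_iff)
  qed
qed

lemma com_bot_if_letters_identified:
  assumes X: "fic X" and x: "({#0#}, {#1#}) \<in> X"
  shows "X = com_bot"
proof
  show "X \<subseteq> com_bot"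
    using fic_subset_Words[OF X] unfolding com_bot_def .
  show "com_bot \<subseteq> X"
  proof safe
    fix u v
    assume "(u, v) \<in> com_bot"
    then have "\<forall>x. (\<lambda>z::nat. if z = 0 then u else v) x \<noteq> {#}"
      by (simp add: com_bot_def)
    from fic_subst[OF X x this] show "(u, v) \<in> X"
      by simp
  qed
qed

lemma content_theory_ne_bot: "content_theory \<noteq> com_bot"
proof
  assume eq: "content_theory = com_bot"
  have "({#0#}, {#1::nat#}) \<in> com_bot"
    by (simp add: com_bot_def)
  then have "({#0#}, {#1::nat#}) \<in> content_theory"
    by (simp only: eq)
  then show False
    by (simp add: content_theory_iff)
qed

lemma nil_theory_ne_bot: "nil_theory 2 \<noteq> com_bot"
proof
  assume eq: "nil_theory 2 = com_bot"
  have "({#0#}, {#1::nat#}) \<in> com_bot"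
    by (simp add: com_bot_def)
  then have "({#0#}, {#1::nat#}) \<in> nil_theory 2"
    by (simp only: eq)
  then show False
    by (simp add: nil_theory_iff)
qed

lemma com_atom_eq_if_subset:
  assumes "com_atom X" "fic T" "X \<subseteq> T" "T \<noteq> com_bot"
  shows "T = X"
  using assms unfolding com_atom_def com_le_def by blast

lemma satisfies_absorption_one:
  assumes X: "fic X" and E: "satisfies_absorption X a c" and P: "satisfies_period X m" and m: "1 \<le> m"
  shows "satisfies_absorption X 1 c"
  unfolding satisfies_absorption_def
proof (intro allI impI)
  fix s t :: word
  assume s: "s \<noteq> {#}" and t: "t \<noteq> {#}"
  let ?S = "repeat_mset (a * m) s"
  have sS: "(s, s + ?S) \<in> X"
    using satisfies_periodD[OF satisfies_period_mult[OF X P, of a] s] by (simp add: mult.commute)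
  have "repeat_mset m s \<noteq> {#}"
    using m s by (simp add: repeat_mset_eq_empty_iff)
  from satisfies_absorptionD[OF E this t] have "(?S, ?S + repeat_mset c t) \<in> X"
    by simp
  then have "(s, s + ?S + repeat_mset c t) \<in> X"
    using fic_trans[OF X sS fic_add_left[OF X]] by (simp add: add.assoc)
  moreover have "(s + ?S + repeat_mset c t, s + repeat_mset c t) \<in> X"
    using fic_sym[OF X fic_add_right[OF X sS]] .
  ultimately show "(repeat_mset 1 s, repeat_mset 1 s + repeat_mset c t) \<in> X"
    using fic_trans[OF X] by simp
qed

lemma padded_letters_not_identified:
  assumes X: "fic X" and distinct: "({#0#}, {#1#}) \<notin> X" and E: "satisfies_absorption X 1 c"
  shows "({#0#} + repeat_mset c {#0, 0, 1, 1#}, {#1#} + repeat_mset c {#0, 0, 1, 1#}) \<notin> X"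
proof
  assume padded: "({#0#} + repeat_mset c {#0, 0, 1, 1#}, {#1#} + repeat_mset c {#0, 0, 1, 1#}) \<in> X"
  have "({#x#}, {#x#} + repeat_mset c {#0, 0, 1, 1#}) \<in> X" for x
    using satisfies_absorptionD[OF E, of "{#x#}" "{#0, 0, 1, 1#}"] by simp
  then have "({#0#}, {#1#}) \<in> X"
    using fic_trans[OF X fic_trans[OF X _ padded] fic_sym[OF X]] by blast
  with distinct show False ..
qed

lemma cube_swap_not_in:
  assumes X: "fic X" and "1 \<le> c"
    and key: "({#0#} + repeat_mset c {#0, 0, 1, 1#}, {#1#} + repeat_mset c {#0, 0, 1, 1#}) \<notin> X"
  shows "({#0, 0, 1#}, {#0, 1, 1#}) \<notin> X"
proof
  obtain c' where c: "c = Suc c'"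
    using assms(2) by (cases c) auto
  assume "({#0, 0, 1#}, {#0, 1, 1#}) \<in> X"
  from fic_add_right[OF X this, of "{#0, 1#} + repeat_mset c' {#0, 0, 1, 1#}"]
  have "({#0#} + repeat_mset c {#0, 0, 1, 1#}, {#1#} + repeat_mset c {#0, 0, 1, 1#}) \<in> X"
    unfolding c by (simp add: add_mset_commute)
  with key show False ..
qed

lemma padded_letters_in_nil_theory_4:
  assumes "1 \<le> c"
  shows "({#0#} + repeat_mset c {#0, 0, 1, 1#}, {#1#} + repeat_mset c {#0, 0, 1, 1#}) \<in> nil_theory 4"
  using assms by (simp add: nil_theory_iff)

lemma Int_swap_theory_subset_nil_theory:
  assumes X: "fic X" and swap: "({#0, 0, 1#}, {#0, 1, 1#}) \<notin> X"
  shows "X \<inter> swap_theory \<subseteq> nil_theory 4"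
proof safe
  fix u v
  assume uv: "(u, v) \<in> X" "(u, v) \<in> swap_theory"
  show "(u, v) \<in> nil_theory 4"
  proof (cases "cube_swap u v")
    case True
    then obtain a b where ab: "a \<noteq> b" "u = {#a, a, b#}" "v = {#a, b, b#}"
      unfolding cube_swap_def by blast
    let ?\<sigma> = "\<lambda>z::nat. if z = b then {#1::nat#} else {#0#}"
    have "(subst ?\<sigma> u, subst ?\<sigma> v) \<in> X"
      by (rule fic_subst[OF X uv(1)]) simp
    then have "({#0, 0, 1#}, {#0, 1, 1#}) \<in> X"
      using ab by (simp add: add_mset_commute)
    with swap show ?thesis ..
  next
    case False
    then show ?thesis
      using uv(2) by (simp add: swap_theory_iff)
  qed
qed

lemma cube_swap_in_swap_theory: "({#0, 0, 1#}, {#0, 1, 1#}) \<in> swap_theory"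
  unfolding swap_theory_iff cube_swap_def by (intro disjI2 exI[of _ 0] exI[of _ 1]) simp

theorem not_com_neutral_other_atom:
  assumes atom: "com_atom X" and "X \<noteq> SL" "X \<noteq> ZM"
  shows "\<not> com_neutral X"
proof
  assume neutral: "com_neutral X"
  have X: "fic X" and "X \<noteq> com_bot"
    using atom unfolding com_atom_def by auto
  then have distinct: "({#0#}, {#1#}) \<notin> X"
    using com_bot_if_letters_identified by blast
  have "\<not> X \<subseteq> content_theory"
    using com_atom_eq_if_subset[OF atom fic_content_theory] content_theory_ne_bot assms(2)
    unfolding SL_eq by blast
  then obtain a c where c: "1 \<le> c" and E: "satisfies_absorption X a c"
    using satisfies_absorption_if_not_subset_content[OF X] by blast
  have "\<not> X \<subseteq> nil_theory 2"
    using com_atom_eq_if_subset[OF atom fic_nil_theory] nil_theory_ne_bot assms(3)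
    unfolding ZM_eq by blast
  then obtain m where "1 \<le> m" "satisfies_period X m"
    using satisfies_period_if_not_subset_nil[OF X] by blast
  then have key: "({#0#} + repeat_mset c {#0, 0, 1, 1#}, {#1#} + repeat_mset c {#0, 0, 1, 1#}) \<notin> X"
    using padded_letters_not_identified[OF X distinct] satisfies_absorption_one[OF X E] by blast
  have swap: "({#0, 0, 1#}, {#0, 1, 1#}) \<notin> X"
    by (rule cube_swap_not_in[OF X c key])
  let ?N = "nil_theory 4"
  have N: "fic (eq_closure (?N \<union> X))"
    using fic_subset_Words[OF X] fic_subset_Words[OF fic_nil_theory] by (intro fic_eq_closure) blast
  have "eq_closure (?N \<union> X) \<noteq> X"
    using eq_closure_upper[of "?N \<union> X"] padded_letters_in_nil_theory_4[OF c] key by blast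
  then have "eq_closure (?N \<union> X) = com_bot"
    using com_atom_eq_if_subset[OF atom N] eq_closure_upper[of "?N \<union> X"] by blast
  then have "({#0, 0, 1#}, {#0, 1, 1#}) \<in> eq_closure (X \<union> swap_theory) \<inter> eq_closure (swap_theory \<union> ?N)
      \<inter> eq_closure (?N \<union> X)"
    using eq_closure_upper[of "X \<union> swap_theory"] eq_closure_upper[of "swap_theory \<union> ?N"]
      cube_swap_in_swap_theory by (auto simp: com_bot_def)
  moreover have "eq_closure (X \<inter> swap_theory \<union> swap_theory \<inter> ?N \<union> ?N \<inter> X) \<subseteq> ?N"
    using Int_swap_theory_subset_nil_theory[OF X swap] by (intro eq_closure_least[OF fic_nil_theory]) blast
  ultimately have "({#0, 0, 1#}, {#0, 1, 1#}) \<in> ?N"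
    using neutral fic_swap_theory fic_nil_theory unfolding com_neutral_iff[OF X] by blast
  then show False
    by (simp add: nil_theory_iff)
qed

theorem mainTheorem11:
  assumes "com_atom X"
  shows "com_neutral X \<longleftrightarrow> X = SL \<or> X = ZM"
  using not_com_neutral_other_atom[OF assms] com_neutral_SL com_neutral_ZM by blast

end
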